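(* Let $\mathsf{P}>0$, $A_{\mathsf{u},k}>0$, $\sigma_k^2>0$, $\mathsf{g}_k>0$ for $k\in\{1,2\}$, $k_0,\eta>0$, and $\overline{\rho}\in(0,1]$. Set $\beta_k=\frac{A_{\mathsf{u},k}k_0^2\eta^2}{4\pi\sigma_k^2}$ and $\overline{\gamma}_{\mathsf{du},k}=\beta_k\mathsf{P}_k$. Consider the problem $$\max_{\mathsf{P}_1,\mathsf{P}_2\ge0,\ \mathsf{P}_1+\mathsf{P}_2\le\mathsf{P}}\ \log_2\big(1+\overline{\gamma}_{\mathsf{du},1}\mathsf{g}_1+\overline{\gamma}_{\mathsf{du},2}\mathsf{g}_2+\overline{\gamma}_{\mathsf{du},1}\overline{\gamma}_{\mathsf{du},2}\mathsf{g}_1\mathsf{g}_2\overline{\rho}\big).$$ Let $\xi=\dfrac{A_{\mathsf{u},1}\mathsf{g}_1/\sigma_1^2-A_{\mathsf{u},2}\mathsf{g}_2/\sigma_2^2}{A_{\mathsf{u},1}A_{\mathsf{u},2}k_0^2\eta^2\mathsf{g}_1\mathsf{g}_2\overline{\rho}/(4\pi\sigma_1^2\sigma_2^2)}$. Then an optimal power allocation is $$(\mathsf{P}_1^\star,\mathsf{P}_2^\star)=\begin{cases}(\mathsf{P},0)&\xi\ge\mathsf{P},\\(0,\mathsf{P})&\xi\le-\mathsf{P},\\\big(\tfrac{\mathsf{P}+\xi}{2},\tfrac{\mathsf{P}-\xi}{2}\big)&\text{otherwise}.\end{cases}$$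
   Context: In the paper this is the power allocation of the dual uplink channel of a two-user downlink channel served by a continuous-aperture array, where $\mathsf{g}_k$ are the users' channel gains and $\overline{\rho}=1-|\rho|^2$ with $\rho$ the channel correlation factor. *)

theory Defs
  imports Complex_Main
begin

definition beta :: "real \<Rightarrow> real \<Rightarrow> real \<Rightarrow> real \<Rightarrow> real" where
  "beta A sigma2 k0 eta = A * k0^2 * eta^2 / (4 * pi * sigma2)"

definition dual_rate ::
  "real \<Rightarrow> real \<Rightarrow> real \<Rightarrow> real \<Rightarrow> real \<Rightarrow> real \<Rightarrow> real \<Rightarrow> real" where
  "dual_rate b1 b2 g1 g2 rhobar P1 P2 =
     log 2 (1 + (b1 * P1) * g1 + (b2 * P2) * g2 + (b1 * P1) * (b2 * P2) * g1 * g2 * rhobar)"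

definition feasible :: "real \<Rightarrow> real \<Rightarrow> real \<Rightarrow> bool" where
  "feasible P P1 P2 \<longleftrightarrow> P1 \<ge> 0 \<and> P2 \<ge> 0 \<and> P1 + P2 \<le> P"

definition xi :: "real \<Rightarrow> real \<Rightarrow> real \<Rightarrow> real \<Rightarrow> real \<Rightarrow> real \<Rightarrow> real \<Rightarrow> real \<Rightarrow> real \<Rightarrow> real" where
  "xi A1 A2 s1 s2 g1 g2 k0 eta rhobar =
     (A1 * g1 / s1 - A2 * g2 / s2) /
     (A1 * A2 * k0^2 * eta^2 * g1 * g2 * rhobar / (4 * pi * s1 * s2))"

definition popt :: "real \<Rightarrow> real \<Rightarrow> real \<times> real" where
  "popt P x = (if x \<ge> P then (P, 0) else if x \<le> - P then (0, P)
               else ((P + x) / 2, (P - x) / 2))"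

end

theory Submission
  imports Defs
begin

text \<open>
  With d = b1 b2 g1 g2 rhobar, the argument of the logarithm is
  1 + a P1 + c P2 + d P1 P2 with c = b2 g2 and a = c + d xi; this is exactly what the
  constant xi is built for. The objective is increasing in P2, so the budget is
  exhausted, P2 = P - P1, and what remains is c P + d P1 (P + xi - P1): a concave
  parabola in P1 with vertex (P + xi)/2, maximized over [0, P] by clipping the vertex.
\<close>

lemma popt_feasible:
  assumes "P \<ge> 0"
  shows "feasible P (fst (popt P x)) (snd (popt P x))"
  using assms unfolding feasible_def popt_def by (auto simp: field_simps)

lemma snd_popt: "snd (popt P x) = P - fst (popt P x)"
  unfolding popt_def by (auto simp: field_simps)

lemma parabola_le_fst_popt:
  fixes P x t :: real
  assumes "0 \<le> t" "t \<le> P"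
  shows "t * (P + x - t) \<le> fst (popt P x) * (P + x - fst (popt P x))"
proof -
  consider "P \<le> x" | "x \<le> - P" "x < P" | "- P < x" "x < P" by linarith
  then show ?thesis
  proof cases
    case 1
    have "0 \<le> (P - t) * (x - t)" using 1 assms by (intro mult_nonneg_nonneg) auto
    then show ?thesis using 1 unfolding popt_def by (simp add: algebra_simps)
  next
    case 2
    have "t * (P + x - t) \<le> 0" using 2 assms by (intro mult_nonneg_nonpos) auto
    then show ?thesis using 2 assms unfolding popt_def by auto
  next
    case 3
    let ?v = "(P + x) / 2"
    have "?v * (P + x - ?v) - t * (P + x - t) = (?v - t)\<^sup>2"
      by (simp add: power2_eq_square field_simps)
    moreover have "fst (popt P x) = ?v" using 3 unfolding popt_def by simp
    ultimately show ?thesis by (metis diff_ge_0_iff_ge zero_le_power2)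
  qed
qed

lemma bilinear_le_budget_exhausted:
  fixes a c d P P1 P2 :: real
  assumes "c \<ge> 0" "d \<ge> 0" "P1 \<ge> 0" "P1 + P2 \<le> P"
  shows "a * P1 + c * P2 + d * P1 * P2 \<le> a * P1 + c * (P - P1) + d * P1 * (P - P1)"
proof -
  have "0 \<le> (c + d * P1) * (P - P1 - P2)" using assms by (intro mult_nonneg_nonneg) auto
  then show ?thesis by (simp add: algebra_simps)
qed

lemma bilinear_le_popt:
  fixes c d P x P1 P2 :: real
  defines "a \<equiv> c + d * x" and "Q1 \<equiv> fst (popt P x)" and "Q2 \<equiv> snd (popt P x)"
  assumes "c \<ge> 0" "d \<ge> 0" "feasible P P1 P2"
  shows "a * P1 + c * P2 + d * P1 * P2 \<le> a * Q1 + c * Q2 + d * Q1 * Q2"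
proof -
  have exhausted: "a * t + c * (P - t) + d * t * (P - t) = c * P + d * (t * (P + x - t))" for t
    unfolding a_def by (simp add: algebra_simps)
  from assms have "0 \<le> P1" "P1 \<le> P" "P1 + P2 \<le> P" unfolding feasible_def by auto
  then have "a * P1 + c * P2 + d * P1 * P2 \<le> c * P + d * (P1 * (P + x - P1))"
    using bilinear_le_budget_exhausted[OF \<open>c \<ge> 0\<close> \<open>d \<ge> 0\<close>] exhausted by metis
  also have "\<dots> \<le> c * P + d * (Q1 * (P + x - Q1))"
    using parabola_le_fst_popt[OF \<open>0 \<le> P1\<close> \<open>P1 \<le> P\<close>] \<open>d \<ge> 0\<close>
    unfolding Q1_def by (simp add: mult_left_mono)
  also have "\<dots> = a * Q1 + c * Q2 + d * Q1 * Q2"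
    using exhausted[of Q1] snd_popt unfolding Q1_def Q2_def by simp
  finally show ?thesis .
qed

lemma beta_pos: "A > 0 \<Longrightarrow> s > 0 \<Longrightarrow> k0 > 0 \<Longrightarrow> eta > 0 \<Longrightarrow> beta A s k0 eta > 0"
  unfolding beta_def by simp

lemma beta_gain_eq_xi:
  fixes A1 A2 s1 s2 g1 g2 k0 eta rhobar :: real
  assumes "A1 > 0" "A2 > 0" "s1 > 0" "s2 > 0" "g1 > 0" "g2 > 0" "k0 > 0" "eta > 0"
    "rhobar > 0"
  defines "b1 \<equiv> beta A1 s1 k0 eta" and "b2 \<equiv> beta A2 s2 k0 eta"
  shows "b1 * g1 = b2 * g2 + b1 * b2 * g1 * g2 * rhobar * xi A1 A2 s1 s2 g1 g2 k0 eta rhobar"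
  unfolding xi_def b1_def b2_def beta_def using assms
  by (simp add: field_simps power2_eq_square)

theorem lemma3:
  fixes P A1 A2 s1 s2 g1 g2 k0 eta rhobar :: real
  assumes "P > 0" and "A1 > 0" and "A2 > 0" and "s1 > 0" and "s2 > 0"
    and "g1 > 0" and "g2 > 0" and "k0 > 0" and "eta > 0"
    and "0 < rhobar" and "rhobar \<le> 1"
  defines "b1 \<equiv> beta A1 s1 k0 eta" and "b2 \<equiv> beta A2 s2 k0 eta"
    and "x \<equiv> xi A1 A2 s1 s2 g1 g2 k0 eta rhobar"
  shows "feasible P (fst (popt P x)) (snd (popt P x)) \<and>
         (\<forall>P1 P2. feasible P P1 P2 \<longrightarrow>
            dual_rate b1 b2 g1 g2 rhobar P1 P2
              \<le> dual_rate b1 b2 g1 g2 rhobar (fst (popt P x)) (snd (popt P x)))"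
proof (intro conjI allI impI)
  show "feasible P (fst (popt P x)) (snd (popt P x))"
    using popt_feasible \<open>P > 0\<close> by simp
  fix P1 P2 assume "feasible P P1 P2"
  have "b1 > 0" "b2 > 0" unfolding b1_def b2_def using assms by (simp_all add: beta_pos)
  define d where "d = b1 * b2 * g1 * g2 * rhobar"
  have "d > 0" unfolding d_def using \<open>b1 > 0\<close> \<open>b2 > 0\<close> assms by simp
  have gain: "b1 * g1 = b2 * g2 + d * x"
    unfolding d_def x_def b1_def b2_def using assms by (intro beta_gain_eq_xi) auto
  have rate: "dual_rate b1 b2 g1 g2 rhobar Q1 Q2
      = log 2 (1 + ((b1 * g1) * Q1 + (b2 * g2) * Q2 + d * Q1 * Q2))" for Q1 Q2
    unfolding dual_rate_def d_def by (simp add: algebra_simps)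
  have "0 < 1 + ((b1 * g1) * P1 + (b2 * g2) * P2 + d * P1 * P2)"
    using \<open>feasible P P1 P2\<close> \<open>b1 > 0\<close> \<open>b2 > 0\<close> \<open>d > 0\<close> assms
    unfolding feasible_def by (simp add: add_pos_nonneg)
  moreover have "(b1 * g1) * P1 + (b2 * g2) * P2 + d * P1 * P2
      \<le> (b1 * g1) * fst (popt P x) + (b2 * g2) * snd (popt P x) + d * fst (popt P x) * snd (popt P x)"
    unfolding gain using \<open>feasible P P1 P2\<close> \<open>b2 > 0\<close> \<open>d > 0\<close> \<open>g2 > 0\<close>
    by (intro bilinear_le_popt) auto
  ultimately show "dual_rate b1 b2 g1 g2 rhobar P1 P2
      \<le> dual_rate b1 b2 g1 g2 rhobar (fst (popt P x)) (snd (popt P x))"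
    unfolding rate by simp
qed

end
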